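(* Suppose every class $c\in[C]$ uses a revision protocol $\rho^c$ that is either imitative via comparison, excess payoff, or pairwise comparison. If a solution of the evolutionary dynamics (E) with initial condition in the relative interior of $X$ (i.e. $\mu^c[s,u](0)>0$ for all $c,s,u$) converges to $\mu^\star$, then $\mu^\star$ is an MSNE.
   Context: Setting. There are $C$ classes of players, $[C]=\{1,\dots,C\}$. For each class $c\in[C]$: $\mathcal S^c$ is a finite state set with $p^c$ elements; for each $s\in\mathcal S^c$, $\mathcal A^c(s)$ is a nonempty finite action set; $\phi^c(\cdot\mid s,a)$ is a probability distribution on $\mathcal S^c$ for each $s\in\mathcal S^c$, $a\in\mathcal A^c(s)$; $\mathcal U^c_D$ is a finite set of $n^c$ deterministic stationary policies, each $u\in\mathcal U^c_D$ assigning to every $s$ a point mass $u(\cdot\mid s)$ on some action of $\mathcal A^c(s)$; $m^c>0$ is the mass of class $c$; $R^c_d>0$ is the state-transition rate. Let $n=\sum_c n^c$. For $u\in\mathcal U^c_D$ put $\phi^{c,u}(s\mid s')=\sum_{a'\in\mathcal A^c(s')}\phi^c(s\mid s',a')u(a'\mid s')$; standing assumption: the Markov chain on $\mathcal S^c$ with kernel $\phi^{c,u}$ has a unique recurrent communicating class, hence a unique stationary distribution $\eta^{c,u}$. The population state is $\mu=(\mu^c)_{c\in[C]}\in X:=\prod_c X^c$, where $X^c=\{\mu^c\in\mathbb R_{\ge0}^{\mathcal S^c\times\mathcal U^c_D}:\sum_{s,u}\mu^c[s,u]=m^c\}$; write $\mu^c[\mathcal S^c,u]:=\sum_{s\in\mathcal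 S^c}\mu^c[s,u]$ and $\mu^c[\mathcal S^c,\cdot]\in\mathbb R^{n^c}_{\ge0}$ for the vector of these. A payoff map $F=(F^c)_{c\in[C]}$ is given, with $F^c$ continuously differentiable on an open neighborhood of $X$ and valued in $\mathbb R^{\mathcal U^c_D}$ ($F^c_u(\mu)$ is the payoff of policy $u$ for class $c$). Each class has a revision protocol $\rho^c=(\rho^c_{uv})_{u,v\in\mathcal U^c_D}$, a Lipschitz continuous map $\mathbb R^{n^c}\times\mathbb R^{n^c}_{\ge0}\to\mathbb R^{n^c\times n^c}_{\ge0}$ whose first argument is a payoff vector and second a policy distribution. The evolutionary dynamics (E) are the ODE on $X$: for all $c\in[C]$, $s\in\mathcal S^c$, $u\in\mathcal U^c_D$, $\dot\mu^c[s,u]=f^{c,d}_{s,u}(\mu)+f^{c,r}_{s,u}(\mu)$, where $f^{c,d}_{s,u}(\mu)=R^c_d\sum_{s'\in\mathcal S^c}\sum_{a'\in\mathcal A^c(s')}\phi^c(s\mid s',a')u(a'\mid s')\mu^c[s',u]-R^c_d\mu^c[s,u]$ and $f^{c,r}_{s,u}(\mu)=\sum_{u'\in\mathcal U^c_D}\mu^c[s,u']\rho^c_{u'u}(F^c(\mu),\mu^c[\mathcal S^c,\cdot])-\mu^c[s,u]\sum_{u'\in\mathcal U^c_D}\rho^c_{uu'}(F^c(\mu),\mu^c[\mathcal S^c,\cdot])$. Solutions from $X$ exist, are unique and remain in $X$. A state $\mu\in X$ is a mixed stationary Nash equilibrium (MSNE) if for every $c\in[C]$: (a) for all $u\in\mathcal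 U^c_D$, $\mu^c[\mathcal S^c,u]>0\Rightarrow F^c_u(\mu)\ge F^c_v(\mu)$ for all $v\in\mathcal U^c_D$; and (b) $f^{c,d}_{s,u}(\mu)=0$ for all $s\in\mathcal S^c,u\in\mathcal U^c_D$. $\mathrm{MSNE}(F,\phi)$ denotes the set of MSNE. Protocol families (for class $c$; $\pi\in\mathbb R^{n^c}$ a payoff vector, $x\in\mathbb R^{n^c}_{\ge0}$ a policy distribution of total mass $m^c$): - imitative: $\rho^c_{uv}(\pi,x)=\frac{x_v}{m^c}r^c_{uv}(\pi,x)$ with $r^c\ge0$ Lipschitz and monotone net conditional imitation rates: for all $u,v,w$, $\pi_v\ge\pi_u\iff r^c_{wv}(\pi,x)-r^c_{vw}(\pi,x)\ge r^c_{wu}(\pi,x)-r^c_{uw}(\pi,x)$; - imitative via comparison: an imitative protocol with $r^c_{uv}(\pi,x)=\varphi^c(\pi_v-\pi_u)$, where $\varphi^c$ is Lipschitz, $\varphi^c(d)=0$ for $d\le0$ and $\varphi^c(d)>0$ for $d>0$; - excess payoff: $\rho^c_{uv}(\pi,x)=\tau^c_v(\hat\pi)$ with $\hat\pi_v=\pi_v-\frac1{m^c}\sum_w x_w\pi_w$, $\tau^c:\mathbb R^{n^c}\to\mathbb R^{n^c}_{\ge0}$ Lipschitz and $\tau^c(\hat\pi)^\top\hat\pi>0$ whenever $\hat\pi$ has a positive component; it is separable if $\tau^c_v(\hat\pi)=\tau^c_v(\hat\pi_v)$ depends only on $\hat\pi_v$, with $\tau^c_v(d)>0\iff d>0$; -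 pairwise comparison: $\rho^c_{uv}(\pi,x)=\rho^c_{uv}(\pi)$ independent of $x$, Lipschitz, with $\rho^c_{uv}(\pi)>0\iff\pi_v>\pi_u$; it is impartial if $\rho^c_{uv}(\pi)=\varphi^c_v(\pi_v-\pi_u)$ for some functions $\varphi^c_v$. *)

theory Defs
  imports "HOL-Analysis.Analysis"
begin

(* Conventions.
   'c : finite type of classes, [C] = UNIV.
   's : finite type containing all states; S c is the state set of class c.
   'a : finite type containing all actions; Act c s is the action set A^c(s).
   A deterministic stationary policy of class c is a map u in PiE (S c) (Act c);
   U c is the finite set of policies of class c.
   A population state is a vector indexed by triples (c,s,u); coordinates with
   s \<notin> S c or u \<notin> U c are junk and are required to be 0 in X.
   phi c s s' a = phi^c(s | s', a). *)

type_synonym ('c,'s,'a) pstate = "real^('c \<times> 's \<times> ('s \<Rightarrow> 'a))"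

definition polp :: "('s \<Rightarrow> 'a) \<Rightarrow> 'a \<Rightarrow> 's \<Rightarrow> real" where
  "polp u a s = (if u s = a then 1 else 0)"

definition kern :: "('s \<Rightarrow> 'a set) \<Rightarrow> ('s \<Rightarrow> 's \<Rightarrow> 'a \<Rightarrow> real) \<Rightarrow> ('s \<Rightarrow> 'a) \<Rightarrow> 's \<Rightarrow> 's \<Rightarrow> real" where
  "kern Act phi u s s' = (\<Sum>a'\<in>Act s'. phi s s' a' * polp u a' s')"

definition chain_step :: "'s set \<Rightarrow> ('s \<Rightarrow> 'a set) \<Rightarrow> ('s \<Rightarrow> 's \<Rightarrow> 'a \<Rightarrow> real) \<Rightarrow> ('s \<Rightarrow> 'a) \<Rightarrow> 's \<Rightarrow> 's \<Rightarrow> bool" where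
  "chain_step S Act phi u s' s \<longleftrightarrow> s' \<in> S \<and> s \<in> S \<and> kern Act phi u s s' > 0"

definition chain_reach :: "'s set \<Rightarrow> ('s \<Rightarrow> 'a set) \<Rightarrow> ('s \<Rightarrow> 's \<Rightarrow> 'a \<Rightarrow> real) \<Rightarrow> ('s \<Rightarrow> 'a) \<Rightarrow> 's \<Rightarrow> 's \<Rightarrow> bool" where
  "chain_reach S Act phi u = (chain_step S Act phi u)\<^sup>*\<^sup>*"

text \<open>for a finite chain: a state is recurrent iff every state reachable from it leads back to it\<close>
definition recurrent_state :: "'s set \<Rightarrow> ('s \<Rightarrow> 'a set) \<Rightarrow> ('s \<Rightarrow> 's \<Rightarrow> 'a \<Rightarrow> real) \<Rightarrow> ('s \<Rightarrow> 'a) \<Rightarrow> 's \<Rightarrow> bool" where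
  "recurrent_state S Act phi u s \<longleftrightarrow> s \<in> S \<and>
     (\<forall>t. chain_reach S Act phi u s t \<longrightarrow> chain_reach S Act phi u t s)"

definition comm_class :: "'s set \<Rightarrow> ('s \<Rightarrow> 'a set) \<Rightarrow> ('s \<Rightarrow> 's \<Rightarrow> 'a \<Rightarrow> real) \<Rightarrow> ('s \<Rightarrow> 'a) \<Rightarrow> 's \<Rightarrow> 's set" where
  "comm_class S Act phi u s = {t \<in> S. chain_reach S Act phi u s t \<and> chain_reach S Act phi u t s}"

definition unique_recurrent_class :: "'s set \<Rightarrow> ('s \<Rightarrow> 'a set) \<Rightarrow> ('s \<Rightarrow> 's \<Rightarrow> 'a \<Rightarrow> real) \<Rightarrow> ('s \<Rightarrow> 'a) \<Rightarrow> bool" where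
  "unique_recurrent_class S Act phi u \<longleftrightarrow>
     (\<exists>!K. \<exists>s. recurrent_state S Act phi u s \<and> K = comm_class S Act phi u s)"

definition popX :: "('c \<Rightarrow> 's set) \<Rightarrow> ('c \<Rightarrow> ('s \<Rightarrow> 'a) set) \<Rightarrow> ('c \<Rightarrow> real) \<Rightarrow> ('c::finite,'s::finite,'a::finite) pstate set" where
  "popX S U m = {\<mu>. (\<forall>c s u. (s \<in> S c \<and> u \<in> U c \<longrightarrow> \<mu> $ (c,s,u) \<ge> 0) \<and>
                             (\<not> (s \<in> S c \<and> u \<in> U c) \<longrightarrow> \<mu> $ (c,s,u) = 0)) \<and>
                 (\<forall>c. (\<Sum>s\<in>S c. \<Sum>u\<in>U c. \<mu> $ (c,s,u)) = m c)}"

definition xdist :: "('c \<Rightarrow> 's set) \<Rightarrow> ('c::finite,'s::finite,'a::finite) pstate \<Rightarrow> 'c \<Rightarrow> ('s \<Rightarrow> 'a) \<Rightarrow> real" where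
  "xdist S \<mu> c u = (\<Sum>s\<in>S c. \<mu> $ (c,s,u))"

definition fd :: "('c \<Rightarrow> 's set) \<Rightarrow> ('c \<Rightarrow> 's \<Rightarrow> 'a set) \<Rightarrow> ('c \<Rightarrow> 's \<Rightarrow> 's \<Rightarrow> 'a \<Rightarrow> real) \<Rightarrow> ('c \<Rightarrow> real)
    \<Rightarrow> ('c::finite,'s::finite,'a::finite) pstate \<Rightarrow> 'c \<Rightarrow> 's \<Rightarrow> ('s \<Rightarrow> 'a) \<Rightarrow> real" where
  "fd S Act phi R \<mu> c s u =
     R c * (\<Sum>s'\<in>S c. \<Sum>a'\<in>Act c s'. phi c s s' a' * polp u a' s' * \<mu> $ (c,s',u)) - R c * \<mu> $ (c,s,u)"

definition fr :: "('c \<Rightarrow> 's set) \<Rightarrow> ('c \<Rightarrow> ('s \<Rightarrow> 'a) set)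
    \<Rightarrow> ('c \<Rightarrow> ('c,'s,'a) pstate \<Rightarrow> ('s \<Rightarrow> 'a) \<Rightarrow> real)
    \<Rightarrow> ('c \<Rightarrow> (('s \<Rightarrow> 'a) \<Rightarrow> real) \<Rightarrow> (('s \<Rightarrow> 'a) \<Rightarrow> real) \<Rightarrow> ('s \<Rightarrow> 'a) \<Rightarrow> ('s \<Rightarrow> 'a) \<Rightarrow> real)
    \<Rightarrow> ('c::finite,'s::finite,'a::finite) pstate \<Rightarrow> 'c \<Rightarrow> 's \<Rightarrow> ('s \<Rightarrow> 'a) \<Rightarrow> real" where
  "fr S U F rho \<mu> c s u =
     (\<Sum>u'\<in>U c. \<mu> $ (c,s,u') * rho c (F c \<mu>) (xdist S \<mu> c) u' u)
     - \<mu> $ (c,s,u) * (\<Sum>u'\<in>U c. rho c (F c \<mu>) (xdist S \<mu> c) u u')"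

definition MSNE :: "('c \<Rightarrow> 's set) \<Rightarrow> ('c \<Rightarrow> 's \<Rightarrow> 'a set) \<Rightarrow> ('c \<Rightarrow> 's \<Rightarrow> 's \<Rightarrow> 'a \<Rightarrow> real)
    \<Rightarrow> ('c \<Rightarrow> ('s \<Rightarrow> 'a) set) \<Rightarrow> ('c \<Rightarrow> real) \<Rightarrow> ('c \<Rightarrow> real)
    \<Rightarrow> ('c \<Rightarrow> ('c,'s,'a) pstate \<Rightarrow> ('s \<Rightarrow> 'a) \<Rightarrow> real)
    \<Rightarrow> ('c::finite,'s::finite,'a::finite) pstate set" where
  "MSNE S Act phi U m R F = {\<mu> \<in> popX S U m. \<forall>c.
      (\<forall>u\<in>U c. xdist S \<mu> c u > 0 \<longrightarrow> (\<forall>v\<in>U c. F c \<mu> u \<ge> F c \<mu> v)) \<and>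
      (\<forall>s\<in>S c. \<forall>u\<in>U c. fd S Act phi R \<mu> c s u = 0)}"

definition payoff_C1 :: "('c::finite,'s::finite,'a::finite) pstate set \<Rightarrow> ('c \<Rightarrow> ('s \<Rightarrow> 'a) set)
    \<Rightarrow> ('c \<Rightarrow> ('c,'s,'a) pstate \<Rightarrow> ('s \<Rightarrow> 'a) \<Rightarrow> real) \<Rightarrow> bool" where
  "payoff_C1 X U F \<longleftrightarrow> (\<exists>Nbh. open Nbh \<and> X \<subseteq> Nbh \<and>
     (\<forall>c. \<forall>u\<in>U c. \<exists>F'. (\<forall>\<mu>\<in>Nbh. ((\<lambda>\<nu>. F c \<nu> u) has_derivative blinfun_apply (F' \<mu>)) (at \<mu>))
                          \<and> continuous_on Nbh F'))"

(* Protocols of one class: U is the policy set, vectors in R^{n^c} are functions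
   on U (values outside U are irrelevant); Lipschitz w.r.t. the l1-norm on U. *)

definition nonneg_on :: "'u set \<Rightarrow> ('u \<Rightarrow> real) \<Rightarrow> bool" where
  "nonneg_on U x \<longleftrightarrow> (\<forall>w\<in>U. x w \<ge> 0)"

definition pdist :: "'u set \<Rightarrow> real \<Rightarrow> ('u \<Rightarrow> real) \<Rightarrow> bool" where
  "pdist U m x \<longleftrightarrow> nonneg_on U x \<and> sum x U = m"

definition prot_lipschitz :: "'u set \<Rightarrow> (('u \<Rightarrow> real) \<Rightarrow> ('u \<Rightarrow> real) \<Rightarrow> 'u \<Rightarrow> 'u \<Rightarrow> real) \<Rightarrow> bool" where
  "prot_lipschitz U r \<longleftrightarrow> (\<exists>L. \<forall>\<pi> \<pi>' x x'. nonneg_on U x \<longrightarrow> nonneg_on U x' \<longrightarrow>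
     (\<forall>u\<in>U. \<forall>v\<in>U. \<bar>r \<pi> x u v - r \<pi>' x' u v\<bar> \<le>
         L * (\<Sum>w\<in>U. \<bar>\<pi> w - \<pi>' w\<bar> + \<bar>x w - x' w\<bar>)))"

definition revision_protocol :: "'u set \<Rightarrow> (('u \<Rightarrow> real) \<Rightarrow> ('u \<Rightarrow> real) \<Rightarrow> 'u \<Rightarrow> 'u \<Rightarrow> real) \<Rightarrow> bool" where
  "revision_protocol U \<rho> \<longleftrightarrow>
     (\<forall>\<pi> x. nonneg_on U x \<longrightarrow> (\<forall>u\<in>U. \<forall>v\<in>U. \<rho> \<pi> x u v \<ge> 0)) \<and> prot_lipschitz U \<rho>"

definition imitative :: "'u set \<Rightarrow> real \<Rightarrow> (('u \<Rightarrow> real) \<Rightarrow> ('u \<Rightarrow> real) \<Rightarrow> 'u \<Rightarrow> 'u \<Rightarrow> real)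
    \<Rightarrow> (('u \<Rightarrow> real) \<Rightarrow> ('u \<Rightarrow> real) \<Rightarrow> 'u \<Rightarrow> 'u \<Rightarrow> real) \<Rightarrow> bool" where
  "imitative U m \<rho> r \<longleftrightarrow>
     (\<forall>\<pi> x. nonneg_on U x \<longrightarrow> (\<forall>u\<in>U. \<forall>v\<in>U. r \<pi> x u v \<ge> 0)) \<and> prot_lipschitz U r \<and>
     (\<forall>\<pi> x. pdist U m x \<longrightarrow> (\<forall>u\<in>U. \<forall>v\<in>U. \<forall>w\<in>U.
         \<pi> v \<ge> \<pi> u \<longleftrightarrow> r \<pi> x w v - r \<pi> x v w \<ge> r \<pi> x w u - r \<pi> x u w)) \<and>
     (\<forall>\<pi> x. pdist U m x \<longrightarrow> (\<forall>u\<in>U. \<forall>v\<in>U. \<rho> \<pi> x u v = x v / m * r \<pi> x u v))"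

definition imitative_comparison :: "'u set \<Rightarrow> real \<Rightarrow> (('u \<Rightarrow> real) \<Rightarrow> ('u \<Rightarrow> real) \<Rightarrow> 'u \<Rightarrow> 'u \<Rightarrow> real) \<Rightarrow> bool" where
  "imitative_comparison U m \<rho> \<longleftrightarrow> (\<exists>\<phi> :: real \<Rightarrow> real.
     (\<exists>L. L-lipschitz_on UNIV \<phi>) \<and> (\<forall>d\<le>0. \<phi> d = 0) \<and> (\<forall>d>0. \<phi> d > 0) \<and>
     imitative U m \<rho> (\<lambda>\<pi> x u v. \<phi> (\<pi> v - \<pi> u)))"

definition excess_payoff :: "'u set \<Rightarrow> real \<Rightarrow> (('u \<Rightarrow> real) \<Rightarrow> ('u \<Rightarrow> real) \<Rightarrow> 'u \<Rightarrow> 'u \<Rightarrow> real) \<Rightarrow> bool" where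
  "excess_payoff U m \<rho> \<longleftrightarrow> (\<exists>\<tau> :: ('u \<Rightarrow> real) \<Rightarrow> 'u \<Rightarrow> real.
     (\<forall>p. \<forall>v\<in>U. \<tau> p v \<ge> 0) \<and>
     (\<exists>L. \<forall>p p'. \<forall>v\<in>U. \<bar>\<tau> p v - \<tau> p' v\<bar> \<le> L * (\<Sum>w\<in>U. \<bar>p w - p' w\<bar>)) \<and>
     (\<forall>p. (\<exists>v\<in>U. p v > 0) \<longrightarrow> (\<Sum>v\<in>U. \<tau> p v * p v) > 0) \<and>
     (\<forall>\<pi> x. pdist U m x \<longrightarrow> (\<forall>u\<in>U. \<forall>v\<in>U.
         \<rho> \<pi> x u v = \<tau> (\<lambda>w. \<pi> w - (1 / m) * (\<Sum>w'\<in>U. x w' * \<pi> w')) v)))"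

definition pairwise_comparison :: "'u set \<Rightarrow> (('u \<Rightarrow> real) \<Rightarrow> ('u \<Rightarrow> real) \<Rightarrow> 'u \<Rightarrow> 'u \<Rightarrow> real) \<Rightarrow> bool" where
  "pairwise_comparison U \<rho> \<longleftrightarrow>
     (\<forall>\<pi> x x'. nonneg_on U x \<longrightarrow> nonneg_on U x' \<longrightarrow> (\<forall>u\<in>U. \<forall>v\<in>U. \<rho> \<pi> x u v = \<rho> \<pi> x' u v)) \<and>
     (\<forall>\<pi> x. nonneg_on U x \<longrightarrow> (\<forall>u\<in>U. \<forall>v\<in>U. \<rho> \<pi> x u v > 0 \<longleftrightarrow> \<pi> v > \<pi> u))"

end

theory Submission
  imports Defs
begin

(* Along the trajectory every coordinate converges, and so does its derivative, the vector
   field: payoffs are continuous and protocols Lipschitz. A convergent function whose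
   derivative converges has derivative tending to 0, so mu* is a rest point. Summing over
   states, the state-transition part cancels, hence the policy distribution x of each class is
   a rest point of the mean dynamic of that class. For pairwise comparison and excess payoff
   protocols every such rest point puts mass only on best replies. For imitative protocols
   this can fail on the boundary; but then a best reply v has a per-capita growth rate tending
   to a positive limit, and since v has positive mass initially its mass would be unbounded.
   Finally, when only best replies are used no revision happens at mu*, state by state, so the
   state-transition part vanishes as well. For excess payoff protocols this last step rests on
   the fact that acuteness and continuity force tau(p) to vanish outside k whenever p <= 0 and
   p k = 0. *)

section \<open>Differential inequalities on a half-line\<close>

lemma has_real_derivative_nonneg_imp_le:
  fixes h h' :: "real \<Rightarrow> real"
  assumes "0 \<le> a" "a \<le> b"
    and deriv: "\<And>t. a \<le> t \<Longrightarrow> t \<le> b \<Longrightarrow> (h has_real_derivative h' t) (at t within {0..})"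
    and nonneg: "\<And>t. a \<le> t \<Longrightarrow> t \<le> b \<Longrightarrow> h' t \<ge> 0"
  shows "h a \<le> h b"
proof (rule DERIV_nonneg_imp_increasing_open[OF assms(2)])
  fix t assume t: "a < t" "t < b"
  then have "at t within {0..} = at t"
    using assms(1) by (intro at_within_interior) simp
  then show "\<exists>y. DERIV h t :> y \<and> y \<ge> 0"
    using deriv[of t] nonneg[of t] t by auto
next
  have "continuous (at t within {a..b}) h" if "t \<in> {a..b}" for t
    using DERIV_continuous[OF deriv] that assms(1)
    by (auto intro: continuous_within_subset[of _ "{0..}"])
  then show "continuous_on {a..b} h"
    by (simp add: continuous_on_eq_continuous_within)
qed

lemma exponential_growth_lower_bound:
  fixes x g :: "real \<Rightarrow> real"
  assumes "0 \<le> a" "a \<le> b"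
    and deriv: "\<And>t. a \<le> t \<Longrightarrow> t \<le> b \<Longrightarrow> (x has_real_derivative x t * g t) (at t within {0..})"
    and rate: "\<And>t. a \<le> t \<Longrightarrow> t \<le> b \<Longrightarrow> g t \<ge> k"
    and nonneg: "\<And>t. a \<le> t \<Longrightarrow> t \<le> b \<Longrightarrow> x t \<ge> 0"
  shows "x a * exp (k * (b - a)) \<le> x b"
proof -
  define h where "h t = x t * exp (- k * t)" for t
  have "h a \<le> h b"
  proof (rule has_real_derivative_nonneg_imp_le[OF assms(1,2)])
    fix t assume t: "a \<le> t" "t \<le> b"
    show "(h has_real_derivative x t * exp (- k * t) * (g t - k)) (at t within {0..})"
      unfolding h_def
      by (rule derivative_eq_intros deriv t refl | simp add: algebra_simps)+
    show "x t * exp (- k * t) * (g t - k) \<ge> 0"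
      using nonneg[OF t] rate[OF t] by simp
  qed
  then have "x a * exp (- k * a) * exp (k * b) \<le> x b * exp (- k * b) * exp (k * b)"
    unfolding h_def by simp
  then show ?thesis
    by (simp add: mult.assoc exp_add[symmetric] algebra_simps)
qed

lemma tendsto_pos_derivative_imp_at_top:
  fixes f f' :: "real \<Rightarrow> real"
  assumes deriv: "\<And>t. t \<ge> 0 \<Longrightarrow> (f has_real_derivative f' t) (at t within {0..})"
    and lim: "(f' \<longlongrightarrow> l) at_top" and "l > 0"
  shows "filterlim f at_top at_top"
proof -
  obtain T where T: "T \<ge> 0" "\<And>t. t \<ge> T \<Longrightarrow> f' t > l / 2"
    using order_tendstoD(1)[OF lim, of "l / 2"] \<open>l > 0\<close>
    by (auto simp: eventually_at_top_linorder) (meson linear order_trans)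
  have "f T + l / 2 * (t - T) \<le> f t" if "t \<ge> T" for t
  proof -
    have "f T - l / 2 * T \<le> f t - l / 2 * t"
    proof (rule has_real_derivative_nonneg_imp_le
        [where h = "\<lambda>s. f s - l / 2 * s" and h' = "\<lambda>s. f' s - l / 2"])
      fix s assume "T \<le> s" "s \<le> t"
      then show "((\<lambda>s. f s - l / 2 * s) has_real_derivative f' s - l / 2) (at s within {0..})"
        using T(1) by (auto intro!: derivative_eq_intros deriv)
      show "f' s - l / 2 \<ge> 0"
        using T(2)[of s] \<open>T \<le> s\<close> by simp
    qed (use T(1) that in auto)
    then show ?thesis
      by (simp add: right_diff_distrib)
  qed
  then have "\<forall>\<^sub>F t in at_top. f T + l / 2 * (t - T) \<le> f t"
    by (rule eventually_at_top_linorderI)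
  then show ?thesis
    by (rule filterlim_at_top_mono[rotated]) (use \<open>l > 0\<close> in real_asymp)
qed

lemma tendsto_derivative_at_top_eq_0:
  fixes f f' :: "real \<Rightarrow> real"
  assumes deriv: "\<And>t. t \<ge> 0 \<Longrightarrow> (f has_real_derivative f' t) (at t within {0..})"
    and "(f \<longlongrightarrow> l) at_top" and "(f' \<longlongrightarrow> l') at_top"
  shows "l' = 0"
proof (rule ccontr)
  assume "l' \<noteq> 0"
  then consider "l' > 0" | "- l' > 0" by linarith
  then show False
  proof cases
    case 1
    then show False
      using tendsto_pos_derivative_imp_at_top[OF deriv assms(3)] assms(2)
      by (meson filterlim_at_top_imp_at_infinity not_tendsto_and_filterlim_at_infinity
          trivial_limit_at_top_linorder)
  next
    case 2
    have "\<And>t. t \<ge> 0 \<Longrightarrow> ((\<lambda>t. - f t) has_real_derivative - f' t) (at t within {0..})"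
      using deriv by (auto intro: derivative_intros)
    then show False
      using tendsto_pos_derivative_imp_at_top 2 tendsto_minus[OF assms(2)]
        tendsto_minus[OF assms(3)]
      by (meson filterlim_at_top_imp_at_infinity not_tendsto_and_filterlim_at_infinity
          trivial_limit_at_top_linorder)
  qed
qed

lemma growth_rate_tendsto_pos_imp_at_top:
  fixes x g :: "real \<Rightarrow> real"
  assumes deriv: "\<And>t. t \<ge> 0 \<Longrightarrow> (x has_real_derivative x t * g t) (at t within {0..})"
    and nonneg: "\<And>t. t \<ge> 0 \<Longrightarrow> x t \<ge> 0" and "x 0 > 0"
    and cont: "continuous_on {0..} g" and lim: "(g \<longlongrightarrow> l) at_top" and "l > 0"
  shows "filterlim x at_top at_top"
proof -
  obtain T where T: "T \<ge> 0" "\<And>t. t \<ge> T \<Longrightarrow> g t > l / 2"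
    using order_tendstoD(1)[OF lim, of "l / 2"] \<open>l > 0\<close>
    by (auto simp: eventually_at_top_linorder) (meson linear order_trans)
  have "compact (g ` {0..T})"
    by (rule compact_continuous_image[OF continuous_on_subset[OF cont]]) auto
  then obtain B where B: "\<And>t. t \<in> {0..T} \<Longrightarrow> \<bar>g t\<bar> \<le> B"
    using compact_imp_bounded bounded_real by (metis image_eqI)
  have "x 0 * exp (- B * (T - 0)) \<le> x T"
    using B T(1) by (intro exponential_growth_lower_bound[where g = g] deriv nonneg) force+
  then have "x T > 0"
    using \<open>x 0 > 0\<close> by (smt (verit) exp_gt_zero mult_pos_pos)
  have "x T * exp (l / 2 * (t - T)) \<le> x t" if "t \<ge> T" for t
    using T that by (intro exponential_growth_lower_bound[where g = g] deriv nonneg)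
      (auto intro: less_imp_le)
  then have "\<forall>\<^sub>F t in at_top. x T * exp (l / 2 * (t - T)) \<le> x t"
    by (rule eventually_at_top_linorderI)
  then show ?thesis
    by (rule filterlim_at_top_mono[rotated]) (use \<open>l > 0\<close> \<open>x T > 0\<close> in real_asymp)
qed

section \<open>The mean dynamic of a single class\<close>

lemma finite_obtain_minimizer:
  fixes f :: "'u \<Rightarrow> real"
  assumes "finite A" "A \<noteq> {}"
  obtains a where "a \<in> A" "\<And>w. w \<in> A \<Longrightarrow> f a \<le> f w"
  using arg_min_if_finite[OF assms, of f] by (auto simp: not_less)

lemma finite_obtain_maximizer:
  fixes f :: "'u \<Rightarrow> real"
  assumes "finite A" "A \<noteq> {}"
  obtains a where "a \<in> A" "\<And>w. w \<in> A \<Longrightarrow> f w \<le> f a"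
  using finite_obtain_minimizer[OF assms, of "\<lambda>w. - f w"] by auto

definition net_inflow :: "'u set \<Rightarrow> ('u \<Rightarrow> real) \<Rightarrow> ('u \<Rightarrow> 'u \<Rightarrow> real) \<Rightarrow> 'u \<Rightarrow> real" where
  "net_inflow U z r u = (\<Sum>w\<in>U. z w * r w u) - z u * (\<Sum>w\<in>U. r u w)"

definition best_reply_support :: "'u set \<Rightarrow> ('u \<Rightarrow> real) \<Rightarrow> ('u \<Rightarrow> real) \<Rightarrow> bool" where
  "best_reply_support U x \<pi> \<longleftrightarrow> (\<forall>u\<in>U. x u > 0 \<longrightarrow> (\<forall>v\<in>U. \<pi> v \<le> \<pi> u))"

lemma net_inflow_cong:
  assumes "\<And>a b. a \<in> U \<Longrightarrow> b \<in> U \<Longrightarrow> r a b = r' a b" and "u \<in> U"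
  shows "net_inflow U z r u = net_inflow U z r' u"
  using assms unfolding net_inflow_def by simp

lemma net_inflow_eq_0_if_no_switching:
  assumes "\<And>w v. w \<in> U \<Longrightarrow> v \<in> U \<Longrightarrow> z w \<noteq> 0 \<Longrightarrow> r w v = 0" and "u \<in> U"
  shows "net_inflow U z r u = 0"
proof -
  have "z w * r w u = 0" if "w \<in> U" for w
    using assms that by (cases "z w = 0") auto
  moreover have "z u * r u w = 0" if "w \<in> U" for w
    using assms that by (cases "z u = 0") auto
  ultimately show ?thesis
    unfolding net_inflow_def by (simp add: sum_distrib_left sum.neutral)
qed

lemma pairwise_rest_point_best_reply_support:
  assumes "finite U" and nonneg: "\<And>u. u \<in> U \<Longrightarrow> x u \<ge> 0"
    and rate_nonneg: "\<And>u v. u \<in> U \<Longrightarrow> v \<in> U \<Longrightarrow> r u v \<ge> 0"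
    and rate_pos: "\<And>u v. u \<in> U \<Longrightarrow> v \<in> U \<Longrightarrow> r u v > 0 \<longleftrightarrow> \<pi> v > \<pi> u"
    and rest: "\<And>u. u \<in> U \<Longrightarrow> net_inflow U x r u = 0"
  shows "best_reply_support U x \<pi>"
proof (rule ccontr)
  assume "\<not> best_reply_support U x \<pi>"
  then obtain u v where u: "u \<in> U" "x u > 0" and v: "v \<in> U" "\<pi> v > \<pi> u"
    unfolding best_reply_support_def by force
  \<comment> \<open>the worst policy in use gains no mass, but loses mass to the better policy v\<close>
  obtain u0 where "u0 \<in> {w\<in>U. x w > 0}" and "\<And>w. w \<in> {w\<in>U. x w > 0} \<Longrightarrow> \<pi> u0 \<le> \<pi> w"
    by (rule finite_obtain_minimizer[of "{w\<in>U. x w > 0}" \<pi>]) (use \<open>finite U\<close> u in auto)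
  then have u0: "u0 \<in> U" "x u0 > 0" and worst: "\<And>w. w \<in> U \<Longrightarrow> x w > 0 \<Longrightarrow> \<pi> u0 \<le> \<pi> w"
    by auto
  have "x w * r w u0 = 0" if "w \<in> U" for w
  proof (cases "x w > 0")
    case True
    then have "\<not> r w u0 > 0"
      using worst[OF that] rate_pos[OF that u0(1)] by simp
    then show ?thesis
      using rate_nonneg[OF that u0(1)] by simp
  next
    case False
    then show ?thesis
      using nonneg[OF that] by simp
  qed
  then have "(\<Sum>w\<in>U. x w * r w u0) = 0"
    by (simp add: sum.neutral)
  moreover have "0 < r u0 v"
    using rate_pos[OF u0(1) v(1)] worst[OF u] v by simp
  moreover have "r u0 v \<le> (\<Sum>w\<in>U. r u0 w)"
    using rate_nonneg u0(1) v(1) \<open>finite U\<close> by (intro member_le_sum) auto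
  ultimately have "net_inflow U x r u0 < 0"
    using u0 unfolding net_inflow_def by (simp add: mult_pos_pos)
  then show False
    using rest[OF u0(1)] by simp
qed

lemma l1_lipschitz_tendsto_along_line:
  fixes \<tau> :: "('u \<Rightarrow> real) \<Rightarrow> 'u \<Rightarrow> real"
  assumes lip: "\<forall>p p'. \<forall>v\<in>U. \<bar>\<tau> p v - \<tau> p' v\<bar> \<le> L * (\<Sum>w\<in>U. \<bar>p w - p' w\<bar>)" and "v \<in> U"
  shows "((\<lambda>t. \<tau> (\<lambda>w. p w + t * d w) v) \<longlongrightarrow> \<tau> p v) (at_right 0)"
proof -
  have "((\<lambda>t. \<tau> (\<lambda>w. p w + t * d w) v - \<tau> p v) \<longlongrightarrow> 0) (at_right 0)"
  proof (rule Lim_null_comparison)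
    show "\<forall>\<^sub>F t in at_right 0. norm (\<tau> (\<lambda>w. p w + t * d w) v - \<tau> p v) \<le> L * (\<Sum>w\<in>U. \<bar>t * d w\<bar>)"
    proof (intro always_eventually allI)
      fix t
      show "norm (\<tau> (\<lambda>w. p w + t * d w) v - \<tau> p v) \<le> L * (\<Sum>w\<in>U. \<bar>t * d w\<bar>)"
        using lip[rule_format, OF \<open>v \<in> U\<close>, of "\<lambda>w. p w + t * d w" p] by simp
    qed
    have "((\<lambda>t. L * (\<Sum>w\<in>U. \<bar>t * d w\<bar>)) \<longlongrightarrow> L * (\<Sum>w\<in>U. \<bar>0 * d w\<bar>)) (at_right 0)"
      by (intro tendsto_intros)
    then show "((\<lambda>t. L * (\<Sum>w\<in>U. \<bar>t * d w\<bar>)) \<longlongrightarrow> 0) (at_right 0)"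
      by simp
  qed
  then show ?thesis
    by (rule LIM_zero_cancel)
qed

lemma excess_payoff_rate_eq_0:
  fixes \<tau> :: "('u \<Rightarrow> real) \<Rightarrow> 'u \<Rightarrow> real"
  assumes "finite U"
    and nonneg: "\<forall>p. \<forall>v\<in>U. \<tau> p v \<ge> 0"
    and lip: "\<forall>p p'. \<forall>v\<in>U. \<bar>\<tau> p v - \<tau> p' v\<bar> \<le> L * (\<Sum>w\<in>U. \<bar>p w - p' w\<bar>)"
    and acute: "\<forall>p. (\<exists>v\<in>U. p v > 0) \<longrightarrow> (\<Sum>v\<in>U. \<tau> p v * p v) > 0"
    and nonpos: "\<And>w. w \<in> U \<Longrightarrow> p w \<le> 0" and k: "k \<in> U" "p k = 0" and j: "j \<in> U" "j \<noteq> k"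
  shows "\<tau> p j = 0"
proof (rule ccontr)
  assume "\<tau> p j \<noteq> 0"
  then have "\<tau> p j > 0"
    using nonneg j(1) by (auto simp: order_less_le)
  define c where "c = (\<tau> p k + 1) / \<tau> p j"
  define d where "d w = (if w = k then 1 else 0) - (if w = j then c else 0)" for w
  define q where "q t = (\<lambda>w. p w + t * d w)" for t
  \<comment> \<open>q t k > 0, so acuteness and p \<le> 0 give \<tau> (q t) \<bullet> d > 0; letting t \<rightarrow> 0 contradicts
      the choice of c\<close>
  have pos: "\<tau> (q t) k - c * \<tau> (q t) j > 0" if "t > 0" for t
  proof -
    have "q t k > 0"
      using k j that by (simp add: q_def d_def)
    then have "(\<Sum>w\<in>U. \<tau> (q t) w * q t w) > 0"
      using acute k(1) by blast
    moreover have "(\<Sum>w\<in>U. \<tau> (q t) w * q t w)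
        = (\<Sum>w\<in>U. \<tau> (q t) w * p w) + t * (\<Sum>w\<in>U. \<tau> (q t) w * d w)"
      by (simp add: q_def distrib_left sum.distrib sum_distrib_left mult.left_commute)
    moreover have "(\<Sum>w\<in>U. \<tau> (q t) w * d w) = \<tau> (q t) k - c * \<tau> (q t) j"
      using \<open>finite U\<close> k(1) j(1)
      by (simp add: d_def right_diff_distrib sum_subtractf if_distrib[of "\<lambda>y. _ * y"] sum.delta
          mult.commute cong: if_cong)
    moreover have "(\<Sum>w\<in>U. \<tau> (q t) w * p w) \<le> 0"
      using nonneg nonpos by (intro sum_nonpos) (auto intro: mult_nonneg_nonpos)
    ultimately show ?thesis
      using that by (smt (verit) mult_le_0_iff)
  qed
  have "((\<lambda>t. \<tau> (q t) k - c * \<tau> (q t) j) \<longlongrightarrow> \<tau> p k - c * \<tau> p j) (at_right 0)"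
    unfolding q_def
    by (intro tendsto_intros l1_lipschitz_tendsto_along_line[OF lip] k(1) j(1))
  moreover have "\<forall>\<^sub>F t in at_right 0. \<tau> (q t) k - c * \<tau> (q t) j \<ge> 0"
    by (rule eventually_at_rightI[of 0 1]) (use pos in \<open>auto intro: less_imp_le\<close>)
  ultimately have "\<tau> p k - c * \<tau> p j \<ge> 0"
    by (rule tendsto_lowerbound) simp
  then show False
    using \<open>\<tau> p j > 0\<close> by (simp add: c_def)
qed

definition excess :: "'u set \<Rightarrow> real \<Rightarrow> ('u \<Rightarrow> real) \<Rightarrow> ('u \<Rightarrow> real) \<Rightarrow> 'u \<Rightarrow> real" where
  "excess U m x \<pi> = (\<lambda>w. \<pi> w - (1 / m) * (\<Sum>w'\<in>U. x w' * \<pi> w'))"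

lemma excess_eq_weighted_gap:
  assumes "(\<Sum>w\<in>U. x w) = m" "m \<noteq> 0"
  shows "excess U m x \<pi> v = (\<Sum>w\<in>U. x w * (\<pi> v - \<pi> w)) / m"
proof -
  have "(\<Sum>w\<in>U. x w * (\<pi> v - \<pi> w)) = (\<Sum>w\<in>U. x w) * \<pi> v - (\<Sum>w\<in>U. x w * \<pi> w)"
    by (simp add: right_diff_distrib sum_subtractf sum_distrib_right)
  then show ?thesis
    using assms by (simp add: excess_def field_simps)
qed

lemma sum_mult_excess_eq_0:
  assumes "(\<Sum>w\<in>U. x w) = m" "m \<noteq> 0"
  shows "(\<Sum>w\<in>U. x w * excess U m x \<pi> w) = 0"
proof -
  have "(\<Sum>w\<in>U. x w * excess U m x \<pi> w)
      = (\<Sum>w\<in>U. x w * \<pi> w) - (\<Sum>w\<in>U. x w) * ((1 / m) * (\<Sum>w'\<in>U. x w' * \<pi> w'))"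
    by (simp add: excess_def right_diff_distrib sum_subtractf sum_distrib_right sum_divide_distrib)
  then show ?thesis
    using assms by simp
qed

lemma best_reply_support_iff_excess_eq_0:
  assumes "finite U" and nonneg: "\<And>w. w \<in> U \<Longrightarrow> x w \<ge> 0" and "(\<Sum>w\<in>U. x w) = m" "m > 0"
    and "v \<in> U" and best: "\<And>w. w \<in> U \<Longrightarrow> \<pi> w \<le> \<pi> v"
  shows "best_reply_support U x \<pi> \<longleftrightarrow> excess U m x \<pi> v = 0"
proof -
  have gap_nonneg: "x w * (\<pi> v - \<pi> w) \<ge> 0" if "w \<in> U" for w
    using nonneg[OF that] best[OF that] by simp
  have "excess U m x \<pi> v = 0 \<longleftrightarrow> (\<forall>w\<in>U. x w * (\<pi> v - \<pi> w) = 0)"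
    using assms gap_nonneg by (simp add: excess_eq_weighted_gap sum_nonneg_eq_0_iff)
  also have "\<dots> \<longleftrightarrow> best_reply_support U x \<pi>"
    unfolding best_reply_support_def
    using nonneg best \<open>v \<in> U\<close> by (smt (verit, best) mult_eq_0_iff)
  finally show ?thesis
    by simp
qed

lemma excess_payoff_rest_point_best_reply_support:
  fixes \<tau> :: "('u \<Rightarrow> real) \<Rightarrow> 'u \<Rightarrow> real"
  assumes "finite U" and nonneg: "\<And>w. w \<in> U \<Longrightarrow> x w \<ge> 0" and mass: "(\<Sum>w\<in>U. x w) = m" "m > 0"
    and acute: "\<forall>p. (\<exists>v\<in>U. p v > 0) \<longrightarrow> (\<Sum>v\<in>U. \<tau> p v * p v) > 0"
    and rest: "\<And>u. u \<in> U \<Longrightarrow> net_inflow U x (\<lambda>a b. \<tau> (excess U m x \<pi>) b) u = 0"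
  shows "best_reply_support U x \<pi>"
proof (rule ccontr)
  assume not_best: "\<not> best_reply_support U x \<pi>"
  define p where "p = excess U m x \<pi>"
  define T where "T = (\<Sum>v\<in>U. \<tau> p v)"
  \<comment> \<open>at a rest point the switching rates are proportional to x, and x is orthogonal to p\<close>
  have proportional: "\<tau> p w = x w * T / m" if "w \<in> U" for w
  proof -
    have "net_inflow U x (\<lambda>a b. \<tau> p b) w = m * \<tau> p w - x w * T"
      unfolding net_inflow_def T_def by (simp add: sum_distrib_right[symmetric] mass)
    then show ?thesis
      using rest[OF that] \<open>m > 0\<close> unfolding p_def by (simp add: field_simps)
  qed
  have "(\<Sum>v\<in>U. \<tau> p v * p v) = T / m * (\<Sum>v\<in>U. x v * p v)"
    by (simp add: proportional sum_distrib_left mult_ac)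
  also have "\<dots> = 0"
    using mass unfolding p_def by (simp add: sum_mult_excess_eq_0)
  finally have "(\<Sum>v\<in>U. \<tau> p v * p v) = 0" .
  moreover obtain v where v: "v \<in> U" "\<And>w. w \<in> U \<Longrightarrow> \<pi> w \<le> \<pi> v"
    using finite_obtain_maximizer[of U \<pi>] \<open>finite U\<close> not_best
    unfolding best_reply_support_def by blast
  moreover have "p v > 0"
  proof -
    have "p v = (\<Sum>w\<in>U. x w * (\<pi> v - \<pi> w)) / m"
      unfolding p_def using mass by (simp add: excess_eq_weighted_gap)
    moreover have "(\<Sum>w\<in>U. x w * (\<pi> v - \<pi> w)) \<ge> 0"
      using nonneg v(2) by (intro sum_nonneg) simp
    ultimately show ?thesis
      using best_reply_support_iff_excess_eq_0[where \<pi> = \<pi>, OF \<open>finite U\<close> nonneg mass v]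
        not_best \<open>m > 0\<close>
      unfolding p_def by (simp add: order_less_le)
  qed
  ultimately show False
    using acute by force
qed

lemma excess_payoff_net_inflow_eq_0:
  fixes \<tau> :: "('u \<Rightarrow> real) \<Rightarrow> 'u \<Rightarrow> real"
  assumes "finite U"
    and nonneg: "\<forall>p. \<forall>v\<in>U. \<tau> p v \<ge> 0"
    and lip: "\<forall>p p'. \<forall>v\<in>U. \<bar>\<tau> p v - \<tau> p' v\<bar> \<le> L * (\<Sum>w\<in>U. \<bar>p w - p' w\<bar>)"
    and acute: "\<forall>p. (\<exists>v\<in>U. p v > 0) \<longrightarrow> (\<Sum>v\<in>U. \<tau> p v * p v) > 0"
    and nonpos: "\<And>w. w \<in> U \<Longrightarrow> p w \<le> 0" and support: "\<And>w. w \<in> U \<Longrightarrow> z w \<noteq> 0 \<Longrightarrow> p w = 0"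
    and "u \<in> U"
  shows "net_inflow U z (\<lambda>a b. \<tau> p b) u = 0"
proof -
  have vanish: "z a * \<tau> p b = 0" if "a \<in> U" "b \<in> U" "a \<noteq> b" for a b
    using excess_payoff_rate_eq_0[OF \<open>finite U\<close> nonneg lip acute nonpos \<open>a \<in> U\<close> _ \<open>b \<in> U\<close>]
      support that
    by fastforce
  have "net_inflow U z (\<lambda>a b. \<tau> p b) u = (\<Sum>w\<in>U. z w * \<tau> p u - z u * \<tau> p w)"
    unfolding net_inflow_def by (simp add: sum_subtractf sum_distrib_left)
  also have "\<dots> = 0"
    using vanish \<open>u \<in> U\<close> by (intro sum.neutral) (metis diff_self)
  finally show ?thesis .
qed

definition imitative_growth_rate ::
    "'u set \<Rightarrow> real \<Rightarrow> (real \<Rightarrow> real) \<Rightarrow> ('u \<Rightarrow> real) \<Rightarrow> ('u \<Rightarrow> real) \<Rightarrow> 'u \<Rightarrow> real" where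
  "imitative_growth_rate U m \<phi> x \<pi> v = (\<Sum>w\<in>U. x w * (\<phi> (\<pi> v - \<pi> w) - \<phi> (\<pi> w - \<pi> v))) / m"

lemma net_inflow_imitative:
  "net_inflow U x (\<lambda>a b. x b / m * \<phi> (\<pi> b - \<pi> a)) v = x v * imitative_growth_rate U m \<phi> x \<pi> v"
  unfolding net_inflow_def imitative_growth_rate_def
  by (simp add: sum_distrib_left sum_subtractf sum_divide_distrib right_diff_distrib
      diff_divide_distrib mult_ac)

lemma imitative_growth_rate_pos:
  assumes "finite U" and nonneg: "\<And>w. w \<in> U \<Longrightarrow> x w \<ge> 0" and "m > 0"
    and \<phi>_nonpos: "\<forall>d\<le>0. \<phi> d = 0" and \<phi>_pos: "\<forall>d>0. \<phi> d > 0"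
    and "v \<in> U" and best: "\<And>w. w \<in> U \<Longrightarrow> \<pi> w \<le> \<pi> v" and not_best: "\<not> best_reply_support U x \<pi>"
  shows "imitative_growth_rate U m \<phi> x \<pi> v > 0"
proof -
  have term_eq: "x w * (\<phi> (\<pi> v - \<pi> w) - \<phi> (\<pi> w - \<pi> v)) = x w * \<phi> (\<pi> v - \<pi> w)" if "w \<in> U" for w
    using \<phi>_nonpos best[OF that] by simp
  have \<phi>_nonneg: "\<phi> d \<ge> 0" for d
    using \<phi>_nonpos \<phi>_pos by (cases "d > 0") (auto simp: less_imp_le)
  obtain u where u: "u \<in> U" "x u > 0" "\<pi> u < \<pi> v"
    using not_best best unfolding best_reply_support_def by (meson le_less_trans not_le)
  have "(\<Sum>w\<in>U. x w * \<phi> (\<pi> v - \<pi> w)) > 0"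
    using u \<phi>_pos nonneg \<phi>_nonneg \<open>finite U\<close> by (intro sum_pos2[of U u]) auto
  then show ?thesis
    unfolding imitative_growth_rate_def using \<open>m > 0\<close> by (simp add: sum.cong[OF refl term_eq])
qed

section \<open>Population states\<close>

context
  fixes S :: "'c::finite \<Rightarrow> 's::finite set" and U :: "'c \<Rightarrow> ('s \<Rightarrow> 'a::finite) set"
    and m :: "'c \<Rightarrow> real" and \<nu> :: "('c, 's, 'a) pstate"
  assumes in_popX: "\<nu> \<in> popX S U m"
begin

lemma popX_nonneg: "s \<in> S c \<Longrightarrow> u \<in> U c \<Longrightarrow> \<nu> $ (c, s, u) \<ge> 0"
  using in_popX by (auto simp: popX_def)

lemma xdist_nonneg: "u \<in> U c \<Longrightarrow> xdist S \<nu> c u \<ge> 0"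
  unfolding xdist_def using popX_nonneg by (auto intro: sum_nonneg)

lemma sum_xdist: "(\<Sum>u\<in>U c. xdist S \<nu> c u) = m c"
proof -
  have "(\<Sum>u\<in>U c. xdist S \<nu> c u) = (\<Sum>s\<in>S c. \<Sum>u\<in>U c. \<nu> $ (c, s, u))"
    unfolding xdist_def by (rule sum.swap)
  then show ?thesis
    using in_popX by (simp add: popX_def)
qed

lemma popX_le_xdist: "s \<in> S c \<Longrightarrow> u \<in> U c \<Longrightarrow> \<nu> $ (c, s, u) \<le> xdist S \<nu> c u"
  unfolding xdist_def using popX_nonneg by (intro member_le_sum) auto

lemma xdist_le_mass: "u \<in> U c \<Longrightarrow> xdist S \<nu> c u \<le> m c"
  unfolding sum_xdist[of c, symmetric] using xdist_nonneg by (intro member_le_sum) auto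

lemma xdist_pdist: "pdist (U c) (m c) (xdist S \<nu> c)"
  using xdist_nonneg sum_xdist by (simp add: pdist_def nonneg_on_def)

end

lemma closed_popX: "closed (popX S U m)"
  unfolding popX_def
  by (intro closed_Collect_conj closed_Collect_all closed_Collect_imp closed_Collect_le
      closed_Collect_eq continuous_intros) auto

lemma payoff_C1_isCont:
  assumes "payoff_C1 X U F" "u \<in> U c" "\<nu> \<in> X"
  shows "isCont (\<lambda>\<nu>. F c \<nu> u) \<nu>"
  using assms unfolding payoff_C1_def by (metis has_derivative_continuous subsetD)

lemma sum_fd_eq_0:
  fixes S :: "'c::finite \<Rightarrow> 's::finite set" and Act :: "'c \<Rightarrow> 's \<Rightarrow> 'a::finite set"
  assumes phi_sum: "\<And>s' a. s' \<in> S c \<Longrightarrow> a \<in> Act c s' \<Longrightarrow> (\<Sum>s\<in>S c. phi c s s' a) = 1"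
    and "U c \<subseteq> PiE (S c) (Act c)" and "u \<in> U c"
  shows "(\<Sum>s\<in>S c. fd S Act phi R \<nu> c s u) = 0"
proof -
  have policy_mass: "(\<Sum>a\<in>Act c s'. polp u a s') = 1" if "s' \<in> S c" for s'
  proof -
    have "u s' \<in> Act c s'"
      using assms(2,3) that by (auto simp: PiE_def Pi_def)
    then show ?thesis
      unfolding polp_def by simp
  qed
  have "(\<Sum>s\<in>S c. \<Sum>s'\<in>S c. \<Sum>a\<in>Act c s'. phi c s s' a * polp u a s' * \<nu> $ (c, s', u))
      = (\<Sum>s'\<in>S c. \<Sum>s\<in>S c. \<Sum>a\<in>Act c s'. phi c s s' a * (polp u a s' * \<nu> $ (c, s', u)))"
    by (subst sum.swap) (simp only: mult.assoc)
  also have "\<dots> = (\<Sum>s'\<in>S c. \<Sum>a\<in>Act c s'. \<Sum>s\<in>S c. phi c s s' a * (polp u a s' * \<nu> $ (c, s', u)))"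
    by (intro sum.cong refl) (rule sum.swap)
  also have "\<dots> = (\<Sum>s'\<in>S c. \<Sum>a\<in>Act c s'. (\<Sum>s\<in>S c. phi c s s' a) * (polp u a s' * \<nu> $ (c, s', u)))"
    by (simp only: sum_distrib_right)
  also have "\<dots> = (\<Sum>s'\<in>S c. \<nu> $ (c, s', u))"
    using phi_sum policy_mass by (simp add: sum_distrib_right[symmetric])
  finally show ?thesis
    unfolding fd_def by (simp add: sum_subtractf sum_distrib_left[symmetric])
qed

lemma fr_eq_net_inflow:
  "fr S U F rho \<nu> c s u = net_inflow (U c) (\<lambda>w. \<nu> $ (c, s, w)) (rho c (F c \<nu>) (xdist S \<nu> c)) u"
  unfolding fr_def net_inflow_def by simp

lemma sum_fr_eq_net_inflow:
  "(\<Sum>s\<in>S c. fr S U F rho \<nu> c s u) = net_inflow (U c) (xdist S \<nu> c) (rho c (F c \<nu>) (xdist S \<nu> c)) u"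
proof -
  have "(\<Sum>s\<in>S c. \<Sum>w\<in>U c. \<nu> $ (c, s, w) * rho c (F c \<nu>) (xdist S \<nu> c) w u)
      = (\<Sum>w\<in>U c. xdist S \<nu> c w * rho c (F c \<nu>) (xdist S \<nu> c) w u)"
    unfolding xdist_def by (subst sum.swap) (simp only: sum_distrib_right)
  then show ?thesis
    unfolding fr_def net_inflow_def by (simp only: sum_subtractf xdist_def sum_distrib_right)
qed

lemma isCont_xdist: "isCont (\<lambda>\<nu>. xdist S \<nu> c u) \<nu>"
  unfolding xdist_def by (intro continuous_intros)

section \<open>Convergent trajectories\<close>

locale convergent_solution =
  fixes S :: "'c::finite \<Rightarrow> 's::finite set"
    and Act :: "'c \<Rightarrow> 's \<Rightarrow> 'a::finite set"
    and phi :: "'c \<Rightarrow> 's \<Rightarrow> 's \<Rightarrow> 'a \<Rightarrow> real"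
    and U :: "'c \<Rightarrow> ('s \<Rightarrow> 'a) set"
    and m R :: "'c \<Rightarrow> real"
    and F :: "'c \<Rightarrow> ('c,'s,'a) pstate \<Rightarrow> ('s \<Rightarrow> 'a) \<Rightarrow> real"
    and rho :: "'c \<Rightarrow> (('s \<Rightarrow> 'a) \<Rightarrow> real) \<Rightarrow> (('s \<Rightarrow> 'a) \<Rightarrow> real) \<Rightarrow> ('s \<Rightarrow> 'a) \<Rightarrow> ('s \<Rightarrow> 'a) \<Rightarrow> real"
    and \<mu> :: "real \<Rightarrow> ('c,'s,'a) pstate"
    and \<mu>star :: "('c,'s,'a) pstate"
  assumes phi_sum: "\<And>c s' a. s' \<in> S c \<Longrightarrow> a \<in> Act c s' \<Longrightarrow> (\<Sum>s\<in>S c. phi c s s' a) = 1"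
    and U_pol: "\<And>c. U c \<subseteq> PiE (S c) (Act c)"
    and m_pos: "\<And>c. m c > 0"
    and F_cont: "\<And>c u \<nu>. u \<in> U c \<Longrightarrow> \<nu> \<in> popX S U m \<Longrightarrow> isCont (\<lambda>\<nu>. F c \<nu> u) \<nu>"
    and rho_prot: "\<And>c. revision_protocol (U c) (rho c)"
    and sol_X: "\<And>t. t \<ge> 0 \<Longrightarrow> \<mu> t \<in> popX S U m"
    and sol_ode: "\<And>c s u t. s \<in> S c \<Longrightarrow> u \<in> U c \<Longrightarrow> t \<ge> 0 \<Longrightarrow>
        ((\<lambda>t. \<mu> t $ (c,s,u)) has_real_derivative
           (fd S Act phi R (\<mu> t) c s u + fr S U F rho (\<mu> t) c s u)) (at t within {0..})"
    and conv: "(\<mu> \<longlongrightarrow> \<mu>star) at_top"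
begin

abbreviation rates :: "('c,'s,'a) pstate \<Rightarrow> 'c \<Rightarrow> ('s \<Rightarrow> 'a) \<Rightarrow> ('s \<Rightarrow> 'a) \<Rightarrow> real" where
  "rates \<nu> c \<equiv> rho c (F c \<nu>) (xdist S \<nu> c)"

lemma sum_fd_vanishes: "u \<in> U c \<Longrightarrow> (\<Sum>s\<in>S c. fd S Act phi R \<nu> c s u) = 0"
  by (rule sum_fd_eq_0[where S = S and Act = Act and phi = phi and U = U, OF phi_sum U_pol])

lemma eventually_popX: "\<forall>\<^sub>F t in at_top. \<mu> t \<in> popX S U m"
  using eventually_ge_at_top[of 0] by eventually_elim (rule sol_X)

lemma limit_in_popX: "\<mu>star \<in> popX S U m"
  by (rule Lim_in_closed_set[OF closed_popX eventually_popX _ conv]) simp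

lemma trajectory_continuous: "continuous_on {0..} \<mu>"
proof -
  have "continuous_on {0..} (\<lambda>t. \<mu> t $ i)" for i
  proof -
    obtain c s u where i: "i = (c, s, u)"
      by (cases i) auto
    show ?thesis
    proof (cases "s \<in> S c \<and> u \<in> U c")
      case True
      then show ?thesis
        unfolding i
        by (intro DERIV_continuous_on
            [where D = "\<lambda>t. fd S Act phi R (\<mu> t) c s u + fr S U F rho (\<mu> t) c s u"] sol_ode) auto
    next
      case False
      then have zero: "\<mu> t $ i = 0" if "t \<in> {0..}" for t
        using sol_X that unfolding i popX_def by auto
      show ?thesis
        by (rule continuous_on_eq[OF continuous_on_const]) (simp add: zero)
    qed
  qed
  then show ?thesis
    using continuous_on_vec_lambda[of "{0..}" "\<lambda>i t. \<mu> t $ i"] by simp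
qed

lemma continuous_on_trajectory_compose:
  assumes "\<And>\<nu>. \<nu> \<in> popX S U m \<Longrightarrow> isCont g \<nu>"
  shows "continuous_on {0..} (\<lambda>t. g (\<mu> t))"
proof -
  have "continuous_on (popX S U m) g"
    using assms by (intro continuous_at_imp_continuous_on) auto
  then show ?thesis
    by (rule continuous_on_compose2[OF _ trajectory_continuous]) (use sol_X in auto)
qed

lemma payoff_tendsto: "u \<in> U c \<Longrightarrow> ((\<lambda>t. F c (\<mu> t) u) \<longlongrightarrow> F c \<mu>star u) at_top"
  by (rule isCont_tendsto_compose[OF F_cont[OF _ limit_in_popX] conv])

lemma xdist_tendsto: "((\<lambda>t. xdist S (\<mu> t) c u) \<longlongrightarrow> xdist S \<mu>star c u) at_top"
  by (rule isCont_tendsto_compose[OF isCont_xdist conv])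

lemma rates_tendsto:
  assumes "a \<in> U c" "b \<in> U c"
  shows "((\<lambda>t. rates (\<mu> t) c a b) \<longlongrightarrow> rates \<mu>star c a b) at_top"
proof -
  obtain L where L: "\<And>\<pi> \<pi>' x x'. nonneg_on (U c) x \<Longrightarrow> nonneg_on (U c) x' \<Longrightarrow>
      \<bar>rho c \<pi> x a b - rho c \<pi>' x' a b\<bar> \<le> L * (\<Sum>w\<in>U c. \<bar>\<pi> w - \<pi>' w\<bar> + \<bar>x w - x' w\<bar>)"
    using rho_prot[of c] assms unfolding revision_protocol_def prot_lipschitz_def by blast
  define dist_t where "dist_t t = L * (\<Sum>w\<in>U c. \<bar>F c (\<mu> t) w - F c \<mu>star w\<bar>
      + \<bar>xdist S (\<mu> t) c w - xdist S \<mu>star c w\<bar>)" for t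
  have "\<forall>\<^sub>F t in at_top. norm (rates (\<mu> t) c a b - rates \<mu>star c a b) \<le> dist_t t"
    using eventually_popX
  proof eventually_elim
    case (elim t)
    then show ?case
      using L[where \<pi> = "F c (\<mu> t)" and \<pi>' = "F c \<mu>star"
          and x = "xdist S (\<mu> t) c" and x' = "xdist S \<mu>star c"]
        xdist_pdist[OF elim] xdist_pdist[OF limit_in_popX]
      unfolding dist_t_def pdist_def by simp
  qed
  moreover have "(dist_t \<longlongrightarrow> 0) at_top"
  proof -
    have "(dist_t \<longlongrightarrow> L * (\<Sum>w\<in>U c. \<bar>F c \<mu>star w - F c \<mu>star w\<bar>
        + \<bar>xdist S \<mu>star c w - xdist S \<mu>star c w\<bar>)) at_top"
      unfolding dist_t_def by (intro tendsto_intros payoff_tendsto xdist_tendsto)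
    then show ?thesis
      by simp
  qed
  ultimately have "((\<lambda>t. rates (\<mu> t) c a b - rates \<mu>star c a b) \<longlongrightarrow> 0) at_top"
    by (rule Lim_null_comparison)
  then show ?thesis
    by (rule LIM_zero_cancel)
qed

lemma limit_rest_point:
  assumes "s \<in> S c" "u \<in> U c"
  shows "fd S Act phi R \<mu>star c s u + fr S U F rho \<mu>star c s u = 0"
proof (rule tendsto_derivative_at_top_eq_0)
  show "((\<lambda>t. \<mu> t $ (c, s, u)) has_real_derivative
      fd S Act phi R (\<mu> t) c s u + fr S U F rho (\<mu> t) c s u) (at t within {0..})" if "t \<ge> 0" for t
    using sol_ode assms that by blast
  show "((\<lambda>t. \<mu> t $ (c, s, u)) \<longlongrightarrow> \<mu>star $ (c, s, u)) at_top"
    using conv by (rule tendsto_vec_nth)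
  show "((\<lambda>t. fd S Act phi R (\<mu> t) c s u + fr S U F rho (\<mu> t) c s u)
      \<longlongrightarrow> fd S Act phi R \<mu>star c s u + fr S U F rho \<mu>star c s u) at_top"
    unfolding fd_def fr_def
    by (intro tendsto_intros tendsto_vec_nth[OF conv] rates_tendsto assms) auto
qed

lemma limit_policy_rest_point:
  assumes "u \<in> U c"
  shows "net_inflow (U c) (xdist S \<mu>star c) (rates \<mu>star c) u = 0"
proof -
  have "(\<Sum>s\<in>S c. fd S Act phi R \<mu>star c s u + fr S U F rho \<mu>star c s u) = 0"
    using limit_rest_point assms by simp
  then show ?thesis
    by (simp add: sum.distrib sum_fd_vanishes[OF assms] sum_fr_eq_net_inflow)
qed

lemma xdist_has_real_derivative:
  assumes "u \<in> U c" "t \<ge> 0"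
  shows "((\<lambda>t. xdist S (\<mu> t) c u) has_real_derivative
      net_inflow (U c) (xdist S (\<mu> t) c) (rates (\<mu> t) c) u) (at t within {0..})"
proof -
  have "((\<lambda>t. xdist S (\<mu> t) c u) has_real_derivative
      (\<Sum>s\<in>S c. fd S Act phi R (\<mu> t) c s u + fr S U F rho (\<mu> t) c s u)) (at t within {0..})"
    unfolding xdist_def using assms by (intro DERIV_sum sol_ode) auto
  then show ?thesis
    by (simp add: sum.distrib sum_fd_vanishes[OF assms(1)] sum_fr_eq_net_inflow)
qed

lemma rates_nonneg: "\<nu> \<in> popX S U m \<Longrightarrow> a \<in> U c \<Longrightarrow> b \<in> U c \<Longrightarrow> rates \<nu> c a b \<ge> 0"
  using rho_prot[of c] xdist_pdist unfolding revision_protocol_def pdist_def by blast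

lemma imitative_comparison_rates:
  assumes "imitative_comparison (U c) (m c) (rho c)"
  obtains \<phi> where "\<And>d. isCont \<phi> d" and "\<forall>d\<le>0. \<phi> d = 0" and "\<forall>d>0. \<phi> d > 0"
    and "\<And>\<nu> a b. \<nu> \<in> popX S U m \<Longrightarrow> a \<in> U c \<Longrightarrow> b \<in> U c \<Longrightarrow>
      rates \<nu> c a b = xdist S \<nu> c b / m c * \<phi> (F c \<nu> b - F c \<nu> a)"
proof -
  obtain \<phi> L where lip: "L-lipschitz_on UNIV \<phi>" and sign: "\<forall>d\<le>0. \<phi> d = 0" "\<forall>d>0. \<phi> d > 0"
    and imit: "imitative (U c) (m c) (rho c) (\<lambda>\<pi> x u v. \<phi> (\<pi> v - \<pi> u))"
    using assms unfolding imitative_comparison_def by blast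
  have "isCont \<phi> d" for d
    using lipschitz_on_continuous_on[OF lip] by (simp add: continuous_on_eq_continuous_at)
  moreover have "rates \<nu> c a b = xdist S \<nu> c b / m c * \<phi> (F c \<nu> b - F c \<nu> a)"
    if "\<nu> \<in> popX S U m" "a \<in> U c" "b \<in> U c" for \<nu> a b
    using imit xdist_pdist[OF that(1)] that(2,3) unfolding imitative_def by simp
  ultimately show thesis
    by (rule that[OF _ sign])
qed

lemma excess_payoff_rates:
  assumes "excess_payoff (U c) (m c) (rho c)"
  obtains \<tau> :: "(('s \<Rightarrow> 'a) \<Rightarrow> real) \<Rightarrow> ('s \<Rightarrow> 'a) \<Rightarrow> real" and L
  where "\<forall>p. \<forall>v\<in>U c. \<tau> p v \<ge> 0"
    and "\<forall>p p'. \<forall>v\<in>U c. \<bar>\<tau> p v - \<tau> p' v\<bar> \<le> L * (\<Sum>w\<in>U c. \<bar>p w - p' w\<bar>)"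
    and "\<forall>p. (\<exists>v\<in>U c. p v > 0) \<longrightarrow> (\<Sum>v\<in>U c. \<tau> p v * p v) > 0"
    and "\<And>\<nu> a b. \<nu> \<in> popX S U m \<Longrightarrow> a \<in> U c \<Longrightarrow> b \<in> U c \<Longrightarrow>
      rates \<nu> c a b = \<tau> (excess (U c) (m c) (xdist S \<nu> c) (F c \<nu>)) b"
proof -
  obtain \<tau> :: "(('s \<Rightarrow> 'a) \<Rightarrow> real) \<Rightarrow> ('s \<Rightarrow> 'a) \<Rightarrow> real" and L
    where props: "\<forall>p. \<forall>v\<in>U c. \<tau> p v \<ge> 0"
      "\<forall>p p'. \<forall>v\<in>U c. \<bar>\<tau> p v - \<tau> p' v\<bar> \<le> L * (\<Sum>w\<in>U c. \<bar>p w - p' w\<bar>)"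
      "\<forall>p. (\<exists>v\<in>U c. p v > 0) \<longrightarrow> (\<Sum>v\<in>U c. \<tau> p v * p v) > 0"
      and rate_form: "\<forall>\<pi> x. pdist (U c) (m c) x \<longrightarrow> (\<forall>u\<in>U c. \<forall>v\<in>U c.
         rho c \<pi> x u v = \<tau> (\<lambda>w. \<pi> w - (1 / m c) * (\<Sum>w'\<in>U c. x w' * \<pi> w')) v)"
    using assms unfolding excess_payoff_def by blast
  have "rates \<nu> c a b = \<tau> (excess (U c) (m c) (xdist S \<nu> c) (F c \<nu>)) b"
    if "\<nu> \<in> popX S U m" "a \<in> U c" "b \<in> U c" for \<nu> a b
    using rate_form xdist_pdist[OF that(1)] that(2,3) unfolding excess_def by simp
  then show thesis
    by (rule that[OF props])
qed

lemma imitative_limit_best_reply_support: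
  assumes imitative: "imitative_comparison (U c) (m c) (rho c)"
    and interior: "\<And>s u. s \<in> S c \<Longrightarrow> u \<in> U c \<Longrightarrow> \<mu> 0 $ (c, s, u) > 0"
  shows "best_reply_support (U c) (xdist S \<mu>star c) (F c \<mu>star)"
proof (rule ccontr)
  assume not_best: "\<not> ?thesis"
  obtain \<phi> where \<phi>_cont: "\<And>d. isCont \<phi> d" and \<phi>_nonpos: "\<forall>d\<le>0. \<phi> d = 0" and \<phi>_pos: "\<forall>d>0. \<phi> d > 0"
    and rate_form: "\<And>\<nu> a b. \<nu> \<in> popX S U m \<Longrightarrow> a \<in> U c \<Longrightarrow> b \<in> U c \<Longrightarrow>
      rates \<nu> c a b = xdist S \<nu> c b / m c * \<phi> (F c \<nu> b - F c \<nu> a)"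
    using imitative_comparison_rates[OF imitative] by blast
  have "U c \<noteq> {}"
    using not_best unfolding best_reply_support_def by auto
  then obtain v where v: "v \<in> U c" "\<And>w. w \<in> U c \<Longrightarrow> F c \<mu>star w \<le> F c \<mu>star v"
    using finite_obtain_maximizer[where f = "F c \<mu>star", OF finite] by blast
  define g where "g \<nu> = imitative_growth_rate (U c) (m c) \<phi> (xdist S \<nu> c) (F c \<nu>) v" for \<nu>
  have inflow: "net_inflow (U c) (xdist S \<nu> c) (rates \<nu> c) v = xdist S \<nu> c v * g \<nu>"
    if "\<nu> \<in> popX S U m" for \<nu>
    unfolding g_def net_inflow_imitative[symmetric] using that
    by (intro net_inflow_cong[OF _ v(1)] rate_form)
  have g_cont: "isCont g \<nu>" if "\<nu> \<in> popX S U m" for \<nu>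
  proof -
    have "isCont (\<lambda>\<nu>. \<phi> (F c \<nu> a - F c \<nu> b)) \<nu>" if "a \<in> U c" "b \<in> U c" for a b
      by (intro isCont_o2[OF _ \<phi>_cont] continuous_intros F_cont \<open>\<nu> \<in> popX S U m\<close> that)
    then show ?thesis
      unfolding g_def imitative_growth_rate_def using v(1) m_pos[of c]
      by (intro continuous_intros isCont_xdist) auto
  qed
  have "S c \<noteq> {}"
    using sum_xdist[OF sol_X, of 0 c] m_pos[of c] by (auto simp: xdist_def)
  \<comment> \<open>v is used at time 0 and its per-capita growth rate tends to a positive limit\<close>
  have "filterlim (\<lambda>t. xdist S (\<mu> t) c v) at_top at_top"
  proof (rule growth_rate_tendsto_pos_imp_at_top)
    show "((\<lambda>t. xdist S (\<mu> t) c v) has_real_derivative xdist S (\<mu> t) c v * g (\<mu> t))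
      (at t within {0..})" if "t \<ge> 0" for t
      using xdist_has_real_derivative[OF v(1) that] inflow[OF sol_X[OF that]] by simp
    show "xdist S (\<mu> t) c v \<ge> 0" if "t \<ge> 0" for t
      by (rule xdist_nonneg[OF sol_X[OF that] v(1)])
    show "xdist S (\<mu> 0) c v > 0"
      unfolding xdist_def using \<open>S c \<noteq> {}\<close> interior v(1) by (intro sum_pos) auto
    show "continuous_on {0..} (\<lambda>t. g (\<mu> t))"
      by (rule continuous_on_trajectory_compose[OF g_cont])
    show "((\<lambda>t. g (\<mu> t)) \<longlongrightarrow> g \<mu>star) at_top"
      by (rule isCont_tendsto_compose[OF g_cont[OF limit_in_popX] conv])
    show "g \<mu>star > 0"
      unfolding g_def using limit_in_popX v not_best m_pos \<phi>_nonpos \<phi>_pos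
      by (intro imitative_growth_rate_pos) (auto intro: xdist_nonneg)
  qed
  then have "\<forall>\<^sub>F t in at_top. m c + 1 \<le> xdist S (\<mu> t) c v \<and> \<mu> t \<in> popX S U m"
    by (simp add: filterlim_at_top eventually_conj eventually_popX)
  then obtain t where "m c + 1 \<le> xdist S (\<mu> t) c v" and "\<mu> t \<in> popX S U m"
    using eventually_happens'[OF trivial_limit_at_top_linorder] by blast
  then show False
    using xdist_le_mass[OF \<open>\<mu> t \<in> popX S U m\<close> v(1)] by simp
qed

lemma limit_best_reply_support:
  assumes family: "imitative_comparison (U c) (m c) (rho c) \<or> excess_payoff (U c) (m c) (rho c)
      \<or> pairwise_comparison (U c) (rho c)"
    and interior: "\<And>s u. s \<in> S c \<Longrightarrow> u \<in> U c \<Longrightarrow> \<mu> 0 $ (c, s, u) > 0"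
  shows "best_reply_support (U c) (xdist S \<mu>star c) (F c \<mu>star)"
  using family
proof (elim disjE)
  assume "imitative_comparison (U c) (m c) (rho c)"
  then show ?thesis
    using interior by (rule imitative_limit_best_reply_support)
next
  assume "excess_payoff (U c) (m c) (rho c)"
  then obtain \<tau> L where acute: "\<forall>p. (\<exists>v\<in>U c. p v > 0) \<longrightarrow> (\<Sum>v\<in>U c. \<tau> p v * p v) > 0"
    and rate_form: "\<And>\<nu> a b. \<nu> \<in> popX S U m \<Longrightarrow> a \<in> U c \<Longrightarrow> b \<in> U c \<Longrightarrow>
      rates \<nu> c a b = \<tau> (excess (U c) (m c) (xdist S \<nu> c) (F c \<nu>)) b"
    by (rule excess_payoff_rates) blast
  have rest: "net_inflow (U c) (xdist S \<mu>star c)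
      (\<lambda>a b. \<tau> (excess (U c) (m c) (xdist S \<mu>star c) (F c \<mu>star)) b) u = 0" if "u \<in> U c" for u
    using limit_policy_rest_point[OF that] net_inflow_cong[OF rate_form[OF limit_in_popX] that]
    by simp
  show ?thesis
    by (rule excess_payoff_rest_point_best_reply_support[OF finite xdist_nonneg[OF limit_in_popX]
          sum_xdist[OF limit_in_popX] m_pos acute rest])
next
  assume "pairwise_comparison (U c) (rho c)"
  then have rate_pos: "rates \<mu>star c a b > 0 \<longleftrightarrow> F c \<mu>star b > F c \<mu>star a"
    if "a \<in> U c" "b \<in> U c" for a b
    using xdist_pdist[OF limit_in_popX] that unfolding pairwise_comparison_def pdist_def by blast
  show ?thesis
    by (rule pairwise_rest_point_best_reply_support[OF finite xdist_nonneg[OF limit_in_popX]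
          rates_nonneg[OF limit_in_popX] rate_pos limit_policy_rest_point])
qed

lemma limit_fr_eq_0:
  assumes family: "imitative_comparison (U c) (m c) (rho c) \<or> excess_payoff (U c) (m c) (rho c)
      \<or> pairwise_comparison (U c) (rho c)"
    and best: "best_reply_support (U c) (xdist S \<mu>star c) (F c \<mu>star)"
    and "s \<in> S c" "u \<in> U c"
  shows "fr S U F rho \<mu>star c s u = 0"
proof -
  define z where "z w = \<mu>star $ (c, s, w)" for w
  \<comment> \<open>each state's row of policies is supported by best replies, since it is dominated by xdist\<close>
  have optimal: "F c \<mu>star b \<le> F c \<mu>star w" if "w \<in> U c" "b \<in> U c" "z w \<noteq> 0" for w b
  proof -
    have "xdist S \<mu>star c w > 0"
      using popX_nonneg[OF limit_in_popX \<open>s \<in> S c\<close> that(1)]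
        popX_le_xdist[OF limit_in_popX \<open>s \<in> S c\<close> that(1)] that(3)
      unfolding z_def by linarith
    then show ?thesis
      using best that(1,2) unfolding best_reply_support_def by blast
  qed
  have "net_inflow (U c) z (rates \<mu>star c) u = 0"
    using family
  proof (elim disjE)
    assume "imitative_comparison (U c) (m c) (rho c)"
    then obtain \<phi> where "\<forall>d\<le>0. \<phi> d = 0"
      and "\<And>\<nu> a b. \<nu> \<in> popX S U m \<Longrightarrow> a \<in> U c \<Longrightarrow> b \<in> U c \<Longrightarrow>
        rates \<nu> c a b = xdist S \<nu> c b / m c * \<phi> (F c \<nu> b - F c \<nu> a)"
      by (rule imitative_comparison_rates) blast
    then show ?thesis
      using optimal limit_in_popX \<open>u \<in> U c\<close> by (intro net_inflow_eq_0_if_no_switching) auto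
  next
    assume "pairwise_comparison (U c) (rho c)"
    then have "\<not> rates \<mu>star c w b > 0" if "w \<in> U c" "b \<in> U c" "z w \<noteq> 0" for w b
      using xdist_pdist[OF limit_in_popX] optimal[OF that] that(1,2)
      unfolding pairwise_comparison_def pdist_def by (meson not_le)
    then have "rates \<mu>star c w b = 0" if "w \<in> U c" "b \<in> U c" "z w \<noteq> 0" for w b
      using rates_nonneg[OF limit_in_popX that(1,2)] that by force
    then show ?thesis
      using \<open>u \<in> U c\<close> by (rule net_inflow_eq_0_if_no_switching)
  next
    assume "excess_payoff (U c) (m c) (rho c)"
    then obtain \<tau> L where nonneg: "\<forall>p. \<forall>v\<in>U c. \<tau> p v \<ge> 0"
      and lip: "\<forall>p p'. \<forall>v\<in>U c. \<bar>\<tau> p v - \<tau> p' v\<bar> \<le> L * (\<Sum>w\<in>U c. \<bar>p w - p' w\<bar>)"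
      and acute: "\<forall>p. (\<exists>v\<in>U c. p v > 0) \<longrightarrow> (\<Sum>v\<in>U c. \<tau> p v * p v) > 0"
      and rate_form: "\<And>\<nu> a b. \<nu> \<in> popX S U m \<Longrightarrow> a \<in> U c \<Longrightarrow> b \<in> U c \<Longrightarrow>
        rates \<nu> c a b = \<tau> (excess (U c) (m c) (xdist S \<nu> c) (F c \<nu>)) b"
      by (rule excess_payoff_rates) blast
    define p where "p = excess (U c) (m c) (xdist S \<mu>star c) (F c \<mu>star)"
    obtain v where v: "v \<in> U c" "\<And>w. w \<in> U c \<Longrightarrow> F c \<mu>star w \<le> F c \<mu>star v"
      using finite_obtain_maximizer[where f = "F c \<mu>star", OF finite] \<open>u \<in> U c\<close> by blast
    \<comment> \<open>at a best-reply distribution the mean payoff is the maximal one, so p = F - max F\<close>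
    have "p v = 0"
      using best_reply_support_iff_excess_eq_0[where \<pi> = "F c \<mu>star", OF finite
          xdist_nonneg[OF limit_in_popX] sum_xdist[OF limit_in_popX] m_pos v] best
      unfolding p_def by blast
    then have p_eq: "p w = F c \<mu>star w - F c \<mu>star v" for w
      by (simp add: p_def excess_def)
    have "net_inflow (U c) z (\<lambda>a b. \<tau> p b) u = 0"
    proof (rule excess_payoff_net_inflow_eq_0[OF finite nonneg lip acute _ _ \<open>u \<in> U c\<close>])
      show "p w \<le> 0" if "w \<in> U c" for w
        using v(2)[OF that] p_eq by simp
      show "p w = 0" if "w \<in> U c" "z w \<noteq> 0" for w
        using optimal[OF that(1) v(1) that(2)] v(2)[OF that(1)] p_eq by simp
    qed
    then show ?thesis
      using net_inflow_cong[OF rate_form[OF limit_in_popX] \<open>u \<in> U c\<close>] unfolding p_def by simp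
  qed
  then show ?thesis
    unfolding fr_eq_net_inflow z_def[abs_def] .
qed

end

theorem corollary1:
  fixes S :: "'c::finite \<Rightarrow> 's::finite set"
    and Act :: "'c \<Rightarrow> 's \<Rightarrow> 'a::finite set"
    and phi :: "'c \<Rightarrow> 's \<Rightarrow> 's \<Rightarrow> 'a \<Rightarrow> real"
    and U :: "'c \<Rightarrow> ('s \<Rightarrow> 'a) set"
    and m R :: "'c \<Rightarrow> real"
    and F :: "'c \<Rightarrow> ('c,'s,'a) pstate \<Rightarrow> ('s \<Rightarrow> 'a) \<Rightarrow> real"
    and rho :: "'c \<Rightarrow> (('s \<Rightarrow> 'a) \<Rightarrow> real) \<Rightarrow> (('s \<Rightarrow> 'a) \<Rightarrow> real) \<Rightarrow> ('s \<Rightarrow> 'a) \<Rightarrow> ('s \<Rightarrow> 'a) \<Rightarrow> real"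
    and \<mu> :: "real \<Rightarrow> ('c,'s,'a) pstate"
    and \<mu>star :: "('c,'s,'a) pstate"
  assumes Act_ne: "\<And>c s. s \<in> S c \<Longrightarrow> Act c s \<noteq> {}"
    and phi_nonneg: "\<And>c s s' a. s \<in> S c \<Longrightarrow> s' \<in> S c \<Longrightarrow> a \<in> Act c s' \<Longrightarrow> phi c s s' a \<ge> 0"
    and phi_sum: "\<And>c s' a. s' \<in> S c \<Longrightarrow> a \<in> Act c s' \<Longrightarrow> (\<Sum>s\<in>S c. phi c s s' a) = 1"
    and U_pol: "\<And>c. U c \<subseteq> PiE (S c) (Act c)"
    and unique_rec: "\<And>c u. u \<in> U c \<Longrightarrow> unique_recurrent_class (S c) (Act c) (phi c) u"
    and m_pos: "\<And>c. m c > 0"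
    and R_pos: "\<And>c. R c > 0"
    and F_C1: "payoff_C1 (popX S U m) U F"
    and rho_prot: "\<And>c. revision_protocol (U c) (rho c)"
    and rho_family: "\<And>c. imitative_comparison (U c) (m c) (rho c) \<or> excess_payoff (U c) (m c) (rho c)
                          \<or> pairwise_comparison (U c) (rho c)"
    and sol_X: "\<And>t. t \<ge> 0 \<Longrightarrow> \<mu> t \<in> popX S U m"
    and sol_ode: "\<And>c s u t. s \<in> S c \<Longrightarrow> u \<in> U c \<Longrightarrow> t \<ge> 0 \<Longrightarrow>
        ((\<lambda>t. \<mu> t $ (c,s,u)) has_real_derivative
           (fd S Act phi R (\<mu> t) c s u + fr S U F rho (\<mu> t) c s u)) (at t within {0..})"
    and init_int: "\<And>c s u. s \<in> S c \<Longrightarrow> u \<in> U c \<Longrightarrow> \<mu> 0 $ (c,s,u) > 0"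
    and conv: "(\<mu> \<longlongrightarrow> \<mu>star) at_top"
  shows "\<mu>star \<in> MSNE S Act phi U m R F"
proof -
  interpret convergent_solution S Act phi U m R F rho \<mu> \<mu>star
    using phi_sum U_pol m_pos payoff_C1_isCont[OF F_C1] rho_prot sol_X sol_ode conv
    by unfold_locales auto
  have best: "best_reply_support (U c) (xdist S \<mu>star c) (F c \<mu>star)" for c
    using rho_family init_int by (rule limit_best_reply_support)
  have "fd S Act phi R \<mu>star c s u = 0" if "s \<in> S c" "u \<in> U c" for c s u
    using limit_rest_point[OF that] limit_fr_eq_0[OF rho_family best that] by simp
  then show ?thesis
    using limit_in_popX best unfolding MSNE_def best_reply_support_def by auto
qed

end
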